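(* For every closed subset $\mathtt{S}$ of $\mathbf{N}^{+}\times\mathbf{N}^{-}$, if $\mathtt{S}\setminus\big((\{1\}\times\mathbf{N}^{-})\cup(\mathbf{N}^{+}\times\{-1,0,1\})\big)$ is infinite, then either $\{2\}\times\mathbf{N}^{-}\subseteq\mathtt{S}$ or $\mathbf{N}^{+}\times\{2\}\subseteq\mathtt{S}$.
   Context: $\mathbb{N}=\{0,1,2,\dots\}$, $\mathbf{N}^{+}=\mathbb{N}\setminus\{0\}$, $\mathbf{N}^{-}=\mathbb{N}\cup\{-1\}$. On $\mathbf{N}^{+}\times\mathbf{N}^{-}$, $(m,n)\ll(m',n')$ iff $m\le m'$ and $n\le n'$. For $(m,n)\in\mathbf{N}^{+}\times\mathbf{N}^{-}$, $\pi(m,n)=\{(m',n')\in\mathbf{N}^{+}\times\mathbf{N}^{-}:(m',n')\ll(m,n)\}$. A subset $\mathtt{S}\subseteq\mathbf{N}^{+}\times\mathbf{N}^{-}$ is closed if $(m,n)\in\mathtt{S}$ implies $\pi(m,n)\subseteq\mathtt{S}$. *)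

theory Defs
  imports Main
begin

definition NP :: "int set" where "NP = {m. m \<ge> 1}"
definition NM :: "int set" where "NM = {n. n \<ge> -1}"

definition dom_ll :: "(int \<times> int) \<Rightarrow> (int \<times> int) \<Rightarrow> bool" (infix "\<lless>" 50) where
  "p \<lless> q \<longleftrightarrow> fst p \<le> fst q \<and> snd p \<le> snd q"

definition pi_set :: "int \<times> int \<Rightarrow> (int \<times> int) set" where
  "pi_set p = {q \<in> NP \<times> NM. q \<lless> p}"

definition closed_set :: "(int \<times> int) set \<Rightarrow> bool" where
  "closed_set S \<longleftrightarrow> S \<subseteq> NP \<times> NM \<and> (\<forall>p\<in>S. pi_set p \<subseteq> S)"

end

theory Submission
  imports Defs
begin

(* If some (a,2) and some (2,b) are missing from the closed set S, then closedness confines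
   every point of S with both coordinates at least 2 to the finite box [2,a) x [2,b). *)

lemma closed_setD:
  assumes "closed_set S" "p \<in> S" "q \<in> NP \<times> NM" "q \<lless> p"
  shows "q \<in> S"
  using assms unfolding closed_set_def pi_set_def by blast

lemma closed_set_fst_less:
  assumes "closed_set S" "(a, k) \<notin> S" "a \<in> NP" "k \<in> NM" "(m, n) \<in> S" "k \<le> n"
  shows "m < a"
proof (rule ccontr)
  assume "\<not> m < a"
  then have "(a, k) \<lless> (m, n)" using assms(6) by (simp add: dom_ll_def)
  then show False using closed_setD[OF assms(1,5)] assms(2-4) by blast
qed

lemma closed_set_snd_less:
  assumes "closed_set S" "(k, b) \<notin> S" "k \<in> NP" "b \<in> NM" "(m, n) \<in> S" "k \<le> m"
  shows "n < b"
proof (rule ccontr)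
  assume "\<not> n < b"
  then have "(k, b) \<lless> (m, n)" using assms(6) by (simp add: dom_ll_def)
  then show False using closed_setD[OF assms(1,5)] assms(2-4) by blast
qed

theorem lemma3:
  fixes S :: "(int \<times> int) set"
  assumes "closed_set S"
    and "infinite (S - (({1} \<times> NM) \<union> (NP \<times> {-1, 0, 1})))"
  shows "{2} \<times> NM \<subseteq> S \<or> NP \<times> {2} \<subseteq> S"
proof (rule ccontr)
  assume "\<not> ?thesis"
  then obtain a b where a: "a \<in> NP" "(a, 2) \<notin> S" and b: "b \<in> NM" "(2, b) \<notin> S"
    by auto
  have "S - (({1} \<times> NM) \<union> (NP \<times> {-1, 0, 1})) \<subseteq> {2..<a} \<times> {2..<b}"
  proof (rule subrelI)
    fix m n
    assume "(m, n) \<in> S - (({1} \<times> NM) \<union> (NP \<times> {-1, 0, 1}))"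
    then have mn: "(m, n) \<in> S" "(m, n) \<notin> {1} \<times> NM \<union> NP \<times> {-1, 0, 1}" by auto
    moreover have "(m, n) \<in> NP \<times> NM" using assms(1) mn(1) by (auto simp: closed_set_def)
    ultimately have "2 \<le> m" "2 \<le> n" by (auto simp: NP_def NM_def)
    moreover have "m < a" using closed_set_fst_less[OF assms(1) a(2,1) _ mn(1)] \<open>2 \<le> n\<close>
      by (simp add: NM_def)
    moreover have "n < b" using closed_set_snd_less[OF assms(1) b(2) _ b(1) mn(1)] \<open>2 \<le> m\<close>
      by (simp add: NP_def)
    ultimately show "(m, n) \<in> {2..<a} \<times> {2..<b}" by simp
  qed
  moreover have "finite ({2..<a} \<times> {2..<b})" by simp
  ultimately show False using assms(2) finite_subset by blast
qed

end
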